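(* Each of the ball relations $\mathbf{B}^{\infty}$ and $\mathbf{B}^{1}$ on $\mathfrak{S}\mathbb{Q}$ (with equivalence $\asymp_{\mathfrak{S}\mathbb{Q}}$) respects the equivalence and satisfies the five metric-space axioms, so that $\mathfrak{S}^\infty\mathbb{Q}$ and $\mathfrak{S}^1\mathbb{Q}$ are metric spaces. More generally, for any metric space $X$, the relation $\mathbf{B}^{\mathfrak{S}^\infty X}_\varepsilon f\,g := \mathsf{fold}_\star(\mathbf{B}^X_\varepsilon\circ f @ g)$ makes $\mathfrak{S}X$ a metric space $\mathfrak{S}^\infty X$.
   Context: Step functions. For a type $X$, $\mathfrak{S}X$ is the inductive type of (formal, rational) step functions on $[0,1]$: constructors $\mathsf{const}\ x$ ($x\in X$, written $\hat x$) and $\mathsf{glue}\ o\ f\ g$ ($o\in(0,1)\cap\mathbb{Q}$, $f,g\in\mathfrak{S}X$). Split. For $a\in(0,1)\cap\mathbb{Q}$: $\mathsf{SplitL}\ \hat x\ a := \hat x$, $\mathsf{SplitR}\ \hat x\ a:=\hat x$, and $\mathsf{SplitL}(\mathsf{glue}\ o\ f_l\ f_r)\ a :=$ $\mathsf{SplitL}\ f_l\ (a/o)$ if $a<o$; $f_l$ if $a=o$; $\mathsf{glue}\ (o/a)\ f_l\ (\mathsf{SplitL}\ f_r\ \tfrac{a-o}{1-o})$ if $a>o$. $\mathsf{SplitR}(\mathsf{glue}\ o\ f_l\ f_r)\ a :=$ $\mathsf{glue}\ \tfrac{o-a}{1-a}\ (\mathsf{SplitR}\ f_l\ (a/o))\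 f_r$ if $a<o$; $f_r$ if $a=o$; $\mathsf{SplitR}\ f_r\ \tfrac{a-o}{1-o}$ if $a>o$. Map and ap. $\mathsf{map}\ \varphi\ \hat x := \widehat{\varphi x}$, $\mathsf{map}\ \varphi\ (\mathsf{glue}\ o\ f\ g):=\mathsf{glue}\ o\ (\mathsf{map}\ \varphi\ f)(\mathsf{map}\ \varphi\ g)$; $\varphi\circ x:=\mathsf{map}\ \varphi\ x$. $\hat\varphi @ x := \mathsf{map}\ \varphi\ x$, $(\mathsf{glue}\ o\ F_l\ F_r) @ x := \mathsf{glue}\ o\ (F_l @ \mathsf{SplitL}\ x\ o)\ (F_r @ \mathsf{SplitR}\ x\ o)$. $f\{\circledast\}g := (\lambda u v. u\circledast v)\circ f @ g$. Fold. $\mathsf{fold}\ \varphi\ \psi\ \hat x:=\varphi x$, $\mathsf{fold}\ \varphi\ \psi\ (\mathsf{glue}\ o\ f\ g) := \psi\ o\ (\mathsf{fold}\ \varphi\ \psi\ f)(\mathsf{fold}\ \varphi\ \psi\ g)$. $\mathsf{fold}_\star := \mathsf{fold}\ \mathrm{id}\ (\lambda o\,p\,q.\ p\wedge q)$, $\mathsf{fold}_{\sup} := \mathsf{fold}\ \mathrm{id}\ (\lambda o\,x\,y.\max x\,y)$, $\mathsf{fold}_{\mathrm{affine}} := \mathsf{fold}\ \mathrm{id}\ (\lambda o\,x\,y.\ ox+(1-o)y)$. Equivalence. For a setoid $X$, $f\asymp_{\mathfrak{S}X} g := \mathsf{fold}_\star(f\{\asymp_X\}g)$. Norms and balls. $\|f\|_\infty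 := \mathsf{fold}_{\sup}(\mathsf{abs}\circ f)$, $\|f\|_1 := \mathsf{fold}_{\mathrm{affine}}(\mathsf{abs}\circ f)$; for $\varepsilon\in\mathbb{Q}^+$, $\mathbf{B}^\infty_\varepsilon f\,g := \|f\{-\}g\|_\infty\le\varepsilon$ and $\mathbf{B}^1_\varepsilon f\,g:=\|f\{-\}g\|_1\le\varepsilon$. Metric space. A metric space is a setoid $(X,\asymp)$ with a respectful relation $\mathbf{B}:\mathbb{Q}^+\Rightarrow X\Rightarrow X\Rightarrow\mathrm{Prop}$ such that for all $x,y,z$ and $\varepsilon,\varepsilon_1,\varepsilon_2\in\mathbb{Q}^+$: (1) $\mathbf{B}_\varepsilon x\,x$; (2) $\mathbf{B}_\varepsilon x\,y\Rightarrow\mathbf{B}_\varepsilon y\,x$; (3) $\mathbf{B}_{\varepsilon_1}x\,y\Rightarrow\mathbf{B}_{\varepsilon_2}y\,z\Rightarrow\mathbf{B}_{\varepsilon_1+\varepsilon_2}x\,z$; (4) $(\forall\delta.\ \varepsilon<\delta\Rightarrow\mathbf{B}_\delta x\,y)\Rightarrow\mathbf{B}_\varepsilon x\,y$; (5) $(\forall\varepsilon.\ \mathbf{B}_\varepsilon x\,y)\Rightarrow x\asymp y$. $\mathbb{Q}$ has $\mathbf{B}_\varepsilon x\,y := |x-y|\le\varepsilon$. *)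

theory Defs
  imports Main "HOL.Rat"
begin

typedef ounit = "{q::rat. 0 < q \<and> q < 1}"
  by (rule exI[of _ "1/2"]) simp

datatype 'a stepfun = Const 'a | Glue ounit "'a stepfun" "'a stepfun"

(* a / c, for a < c *)
definition div_ou :: "ounit \<Rightarrow> ounit \<Rightarrow> ounit" where
  "div_ou a c = Abs_ounit (Rep_ounit a / Rep_ounit c)"

(* (a - c) / (1 - c), for a > c *)
definition rescale_ou :: "ounit \<Rightarrow> ounit \<Rightarrow> ounit" where
  "rescale_ou a c = Abs_ounit ((Rep_ounit a - Rep_ounit c) / (1 - Rep_ounit c))"

primrec splitL :: "'a stepfun \<Rightarrow> ounit \<Rightarrow> 'a stepfun" where
  "splitL (Const x) a = Const x"
| "splitL (Glue c fl fr) a =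
     (if Rep_ounit a < Rep_ounit c then splitL fl (div_ou a c)
      else if Rep_ounit a = Rep_ounit c then fl
      else Glue (div_ou c a) fl (splitL fr (rescale_ou a c)))"

primrec splitR :: "'a stepfun \<Rightarrow> ounit \<Rightarrow> 'a stepfun" where
  "splitR (Const x) a = Const x"
| "splitR (Glue c fl fr) a =
     (if Rep_ounit a < Rep_ounit c then
        Glue (Abs_ounit ((Rep_ounit c - Rep_ounit a) / (1 - Rep_ounit a)))
             (splitR fl (div_ou a c)) fr
      else if Rep_ounit a = Rep_ounit c then fr
      else splitR fr (rescale_ou a c))"

primrec sf_map :: "('a \<Rightarrow> 'b) \<Rightarrow> 'a stepfun \<Rightarrow> 'b stepfun" where
  "sf_map \<phi> (Const x) = Const (\<phi> x)"
| "sf_map \<phi> (Glue c f g) = Glue c (sf_map \<phi> f) (sf_map \<phi> g)"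

primrec sf_ap :: "('a \<Rightarrow> 'b) stepfun \<Rightarrow> 'a stepfun \<Rightarrow> 'b stepfun" where
  "sf_ap (Const \<phi>) x = sf_map \<phi> x"
| "sf_ap (Glue c Fl Fr) x = Glue c (sf_ap Fl (splitL x c)) (sf_ap Fr (splitR x c))"

definition sf_binop :: "('a \<Rightarrow> 'b \<Rightarrow> 'c) \<Rightarrow> 'a stepfun \<Rightarrow> 'b stepfun \<Rightarrow> 'c stepfun" where
  "sf_binop op f g = sf_ap (sf_map (\<lambda>u v. op u v) f) g"

primrec sf_fold :: "('a \<Rightarrow> 'b) \<Rightarrow> (rat \<Rightarrow> 'b \<Rightarrow> 'b \<Rightarrow> 'b) \<Rightarrow> 'a stepfun \<Rightarrow> 'b" where
  "sf_fold \<phi> \<psi> (Const x) = \<phi> x"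
| "sf_fold \<phi> \<psi> (Glue c f g) = \<psi> (Rep_ounit c) (sf_fold \<phi> \<psi> f) (sf_fold \<phi> \<psi> g)"

definition fold_star :: "bool stepfun \<Rightarrow> bool" where
  "fold_star = sf_fold id (\<lambda>c p q. p \<and> q)"

definition fold_sup :: "rat stepfun \<Rightarrow> rat" where
  "fold_sup = sf_fold id (\<lambda>c x y. max x y)"

definition fold_affine :: "rat stepfun \<Rightarrow> rat" where
  "fold_affine = sf_fold id (\<lambda>c x y. c * x + (1 - c) * y)"

definition sf_equiv :: "('a \<Rightarrow> 'a \<Rightarrow> bool) \<Rightarrow> 'a stepfun \<Rightarrow> 'a stepfun \<Rightarrow> bool" where
  "sf_equiv eq f g = fold_star (sf_binop eq f g)"

definition norm_inf :: "rat stepfun \<Rightarrow> rat" where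
  "norm_inf f = fold_sup (sf_map abs f)"

definition norm_1 :: "rat stepfun \<Rightarrow> rat" where
  "norm_1 f = fold_affine (sf_map abs f)"

definition ball_inf :: "rat \<Rightarrow> rat stepfun \<Rightarrow> rat stepfun \<Rightarrow> bool" where
  "ball_inf e f g = (norm_inf (sf_binop (-) f g) \<le> e)"

definition ball_1 :: "rat \<Rightarrow> rat stepfun \<Rightarrow> rat stepfun \<Rightarrow> bool" where
  "ball_1 e f g = (norm_1 (sf_binop (-) f g) \<le> e)"

definition ball_sup_lift :: "(rat \<Rightarrow> 'a \<Rightarrow> 'a \<Rightarrow> bool) \<Rightarrow> rat \<Rightarrow> 'a stepfun \<Rightarrow> 'a stepfun \<Rightarrow> bool" where
  "ball_sup_lift B e f g = fold_star (sf_ap (sf_map (B e) f) g)"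

definition is_metric_space :: "('a \<Rightarrow> 'a \<Rightarrow> bool) \<Rightarrow> (rat \<Rightarrow> 'a \<Rightarrow> 'a \<Rightarrow> bool) \<Rightarrow> bool" where
  "is_metric_space eq B \<longleftrightarrow>
     equivp eq \<and>
     (\<forall>e x x' y y'. 0 < e \<longrightarrow> eq x x' \<longrightarrow> eq y y' \<longrightarrow> (B e x y \<longleftrightarrow> B e x' y')) \<and>
     (\<forall>e x. 0 < e \<longrightarrow> B e x x) \<and>
     (\<forall>e x y. 0 < e \<longrightarrow> B e x y \<longrightarrow> B e y x) \<and>
     (\<forall>e1 e2 x y z. 0 < e1 \<longrightarrow> 0 < e2 \<longrightarrow> B e1 x y \<longrightarrow> B e2 y z \<longrightarrow> B (e1 + e2) x z) \<and>
     (\<forall>e x y. 0 < e \<longrightarrow> (\<forall>d. 0 < d \<longrightarrow> e < d \<longrightarrow> B d x y) \<longrightarrow> B e x y) \<and>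
     (\<forall>x y. (\<forall>e. 0 < e \<longrightarrow> B e x y) \<longrightarrow> eq x y)"

definition ball_rat :: "rat \<Rightarrow> rat \<Rightarrow> rat \<Rightarrow> bool" where
  "ball_rat e x y = (\<bar>x - y\<bar> \<le> e)"

end

theory Submission
  imports Defs
begin

(* A formal step function on [0,1] denotes an ordinary function on the
   half-open interval [0,1): laying out  f  on an interval [lo,hi), the node  Glue c f g
   places  f  on [lo,m) and  g  on [m,hi), where  m = lo + c (hi - lo).  We show that this
   semantics turns the formal operations into pointwise ones: splitL/splitR restrict to a
   subinterval, map and ap act pointwise.  Consequently
     - fold_star h  holds iff  h  is true at every point, and  fold_sup h <= e  iff  h <= e
       everywhere; so  sf_equiv eq,  ball_sup_lift B  and  ball_inf  are pointwise
       relations, and any pointwise lift of a metric space is a metric space;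
     - fold_affine  is the integral over [0,1): it is additive under splitting, hence
       linear, positive and monotone, and a nonnegative function with integral 0 vanishes;
       so  ball_1  is the ball of a distance, which yields a metric space.
   All points are rational; no real numbers are needed. *)

lemma Rep_ounit_bounds: "0 < Rep_ounit c" "Rep_ounit c < 1"
  using Rep_ounit[of c] by auto

lemma Rep_div_ou:
  assumes "Rep_ounit a < Rep_ounit c"
  shows "Rep_ounit (div_ou a c) = Rep_ounit a / Rep_ounit c"
  unfolding div_ou_def using assms Rep_ounit_bounds[of a] Rep_ounit_bounds[of c]
  by (subst Abs_ounit_inverse) (auto simp: divide_simps)

lemma Rep_rescale_ou:
  assumes "Rep_ounit c < Rep_ounit a"
  shows "Rep_ounit (rescale_ou a c) = (Rep_ounit a - Rep_ounit c) / (1 - Rep_ounit c)"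
  unfolding rescale_ou_def using assms Rep_ounit_bounds[of a] Rep_ounit_bounds[of c]
  by (subst Abs_ounit_inverse) (auto simp: divide_simps)

lemma splitR_glue_point:
  "Abs_ounit ((Rep_ounit c - Rep_ounit a) / (1 - Rep_ounit a)) = rescale_ou c a"
  by (simp add: rescale_ou_def)

definition cut_point :: "rat \<Rightarrow> rat \<Rightarrow> ounit \<Rightarrow> rat" where
  "cut_point lo hi c = lo + Rep_ounit c * (hi - lo)"

lemma cut_point_bounds_iff:
  "lo < cut_point lo hi c \<longleftrightarrow> lo < hi" "cut_point lo hi c < hi \<longleftrightarrow> lo < hi"
proof -
  have "0 < Rep_ounit c" "0 < 1 - Rep_ounit c"
    using Rep_ounit_bounds[of c] by simp_all
  then have "0 < Rep_ounit c * (hi - lo) \<longleftrightarrow> 0 < hi - lo"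
    and "0 < (1 - Rep_ounit c) * (hi - lo) \<longleftrightarrow> 0 < hi - lo"
    by (simp_all only: zero_less_mult_iff) auto
  then show "lo < cut_point lo hi c \<longleftrightarrow> lo < hi" "cut_point lo hi c < hi \<longleftrightarrow> lo < hi"
    by (auto simp: cut_point_def algebra_simps)
qed

lemma cut_point_less:
  assumes "lo < hi" "Rep_ounit a < Rep_ounit c"
  shows "cut_point lo hi a < cut_point lo hi c"
  using assms by (simp add: cut_point_def)

lemma cut_point_div_ou:
  assumes "Rep_ounit a < Rep_ounit c"
  shows "cut_point lo (cut_point lo hi c) (div_ou a c) = cut_point lo hi a"
  using assms Rep_ounit_bounds[of c] by (simp add: cut_point_def Rep_div_ou)

lemma cut_point_rescale_ou:
  assumes "Rep_ounit c < Rep_ounit a"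
  shows "cut_point (cut_point lo hi c) hi (rescale_ou a c) = cut_point lo hi a"
  using assms Rep_ounit_bounds[of c] by (simp add: cut_point_def Rep_rescale_ou field_simps)

section \<open>Pointwise semantics of step functions\<close>

primrec sf_eval :: "'a stepfun \<Rightarrow> rat \<Rightarrow> rat \<Rightarrow> rat \<Rightarrow> 'a" where
  "sf_eval (Const x) lo hi t = x"
| "sf_eval (Glue c f g) lo hi t =
     (if t < cut_point lo hi c then sf_eval f lo (cut_point lo hi c) t
      else sf_eval g (cut_point lo hi c) hi t)"

lemma sf_eval_splitL:
  assumes "lo \<le> t" "t < cut_point lo hi a"
  shows "sf_eval (splitL x a) lo (cut_point lo hi a) t = sf_eval x lo hi t"
  using assms
proof (induction x arbitrary: a lo hi)
  case (Const x)
  then show ?case by simp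
next
  case (Glue c fl fr)
  have "lo < hi"
    using Glue.prems cut_point_bounds_iff(1)[of lo hi a] by simp
  consider "Rep_ounit a < Rep_ounit c" | "Rep_ounit a = Rep_ounit c" | "Rep_ounit c < Rep_ounit a"
    by fastforce
  then show ?case
  proof cases
    case 1
    then show ?thesis
      using Glue.IH(1)[where a="div_ou a c" and lo=lo and hi="cut_point lo hi c"] Glue.prems
        cut_point_less[OF \<open>lo < hi\<close> 1] by (simp add: cut_point_div_ou)
  next
    case 2
    then show ?thesis using Glue.prems by (simp add: cut_point_def)
  next
    case 3
    then show ?thesis
      using Glue.IH(2)[where a="rescale_ou a c" and lo="cut_point lo hi c" and hi=hi] Glue.prems
      by (simp add: cut_point_div_ou cut_point_rescale_ou)
  qed
qed

lemma sf_eval_splitR: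
  assumes "cut_point lo hi a \<le> t" "t < hi"
  shows "sf_eval (splitR x a) (cut_point lo hi a) hi t = sf_eval x lo hi t"
  using assms
proof (induction x arbitrary: a lo hi)
  case (Const x)
  then show ?case by simp
next
  case (Glue c fl fr)
  have "lo < hi"
    using Glue.prems cut_point_bounds_iff(2)[of lo hi a] by simp
  consider "Rep_ounit a < Rep_ounit c" | "Rep_ounit a = Rep_ounit c" | "Rep_ounit c < Rep_ounit a"
    by fastforce
  then show ?case
  proof cases
    case 1
    then show ?thesis
      using Glue.IH(1)[where a="div_ou a c" and lo=lo and hi="cut_point lo hi c"] Glue.prems
      by (simp add: splitR_glue_point cut_point_div_ou cut_point_rescale_ou)
  next
    case 2
    then show ?thesis using Glue.prems by (simp add: cut_point_def)
  next
    case 3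
    then show ?thesis
      using Glue.IH(2)[where a="rescale_ou a c" and lo="cut_point lo hi c" and hi=hi] Glue.prems
        cut_point_less[OF \<open>lo < hi\<close> 3] by (simp add: cut_point_rescale_ou)
  qed
qed

lemma sf_eval_map: "sf_eval (sf_map \<phi> x) lo hi t = \<phi> (sf_eval x lo hi t)"
  by (induction x arbitrary: lo hi) auto

lemma sf_eval_ap:
  assumes "lo \<le> t" "t < hi"
  shows "sf_eval (sf_ap F x) lo hi t = sf_eval F lo hi t (sf_eval x lo hi t)"
  using assms
proof (induction F arbitrary: x lo hi)
  case (Const \<phi>)
  then show ?case by (simp add: sf_eval_map)
next
  case (Glue c Fl Fr)
  then show ?case by (simp add: sf_eval_splitL sf_eval_splitR)
qed

lemma sf_eval_binop:
  assumes "lo \<le> t" "t < hi"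
  shows "sf_eval (sf_binop op f g) lo hi t = op (sf_eval f lo hi t) (sf_eval g lo hi t)"
  using assms by (simp add: sf_binop_def sf_eval_ap sf_eval_map)

definition everywhere :: "('a \<Rightarrow> bool) \<Rightarrow> 'a stepfun \<Rightarrow> rat \<Rightarrow> rat \<Rightarrow> bool" where
  "everywhere P h lo hi \<longleftrightarrow> (\<forall>t\<in>{lo..<hi}. P (sf_eval h lo hi t))"

lemma everywhere_Const:
  assumes "lo < hi"
  shows "everywhere P (Const x) lo hi \<longleftrightarrow> P x"
  using assms by (auto simp: everywhere_def)

lemma everywhere_Glue:
  assumes "lo < hi"
  shows "everywhere P (Glue c f g) lo hi \<longleftrightarrow>
     everywhere P f lo (cut_point lo hi c) \<and> everywhere P g (cut_point lo hi c) hi"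
  using assms cut_point_bounds_iff[of lo hi c] unfolding everywhere_def by force

lemma fold_everywhere:
  assumes "lo < hi" and conj: "\<And>c x y. Q (\<psi> c x y) \<longleftrightarrow> Q x \<and> Q y"
  shows "Q (sf_fold \<phi> \<psi> h) \<longleftrightarrow> everywhere (\<lambda>y. Q (\<phi> y)) h lo hi"
  using assms(1)
proof (induction h arbitrary: lo hi)
  case (Const x)
  then show ?case by (simp add: everywhere_Const)
next
  case (Glue c f g)
  then show ?case
    using Glue.IH(1)[of lo "cut_point lo hi c"] Glue.IH(2)[of "cut_point lo hi c" hi]
    by (simp add: conj everywhere_Glue cut_point_bounds_iff)
qed

lemma fold_star_binop:
  "fold_star (sf_binop R f g) \<longleftrightarrow> (\<forall>t\<in>{0..<1}. R (sf_eval f 0 1 t) (sf_eval g 0 1 t))"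
  using fold_everywhere[of 0 1 "\<lambda>b. b" "\<lambda>c p q. p \<and> q" id "sf_binop R f g"]
  by (simp add: fold_star_def everywhere_def sf_eval_binop)

lemma sf_equiv_pointwise:
  "sf_equiv eq = (\<lambda>f g. \<forall>t\<in>{0..<1}. eq (sf_eval f 0 1 t) (sf_eval g 0 1 t))"
  by (simp add: fun_eq_iff sf_equiv_def fold_star_binop)

lemma ball_sup_lift_pointwise:
  "ball_sup_lift B = (\<lambda>e f g. \<forall>t\<in>{0..<1}. B e (sf_eval f 0 1 t) (sf_eval g 0 1 t))"
  by (simp add: fun_eq_iff ball_sup_lift_def fold_star_binop flip: sf_binop_def)

lemma ball_inf_pointwise:
  "ball_inf = (\<lambda>e f g. \<forall>t\<in>{0..<1}. ball_rat e (sf_eval f 0 1 t) (sf_eval g 0 1 t))"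
proof -
  have "fold_sup h \<le> e \<longleftrightarrow> everywhere (\<lambda>y. y \<le> e) h 0 1" for h and e :: rat
    using fold_everywhere[of 0 1 "\<lambda>y. y \<le> e" "\<lambda>c. max" id h] by (simp add: fold_sup_def)
  then show ?thesis
    by (simp add: fun_eq_iff ball_inf_def norm_inf_def everywhere_def
        sf_eval_map sf_eval_binop ball_rat_def)
qed

text \<open>Lifting a metric space pointwise along any family of evaluations  v f t  (t in  D)
  gives a metric space: all five axioms are preserved by a universal quantifier.\<close>

lemma pointwise_metric_space:
  fixes v :: "'f \<Rightarrow> 'i \<Rightarrow> 'a"
  assumes "is_metric_space eq B"
  shows "is_metric_space (\<lambda>f g. \<forall>t\<in>D. eq (v f t) (v g t)) (\<lambda>e f g. \<forall>t\<in>D. B e (v f t) (v g t))"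
  using assms unfolding is_metric_space_def equivp_reflp_symp_transp reflp_def symp_def transp_def
  by meson

text \<open>Density of the rationals, in the form needed for the closedness axiom.\<close>

lemma le_if_le_all_greater:
  fixes x e :: rat
  assumes "\<forall>d. 0 < d \<longrightarrow> e < d \<longrightarrow> x \<le> d" "0 \<le> e"
  shows "x \<le> e"
proof (rule ccontr)
  assume "\<not> x \<le> e"
  then show False using assms(1)[rule_format, of "(x + e) / 2"] assms(2) by simp
qed

lemma distance_metric_space:
  fixes d :: "'a \<Rightarrow> 'a \<Rightarrow> rat"
  assumes "equivp eq"
    and respects: "\<And>x x' y y'. eq x x' \<Longrightarrow> eq y y' \<Longrightarrow> d x y = d x' y'"
    and zero: "\<And>x. d x x = 0"
    and sym: "\<And>x y. d x y = d y x"
    and triangle: "\<And>x y z. d x z \<le> d x y + d y z"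
    and definite: "\<And>x y. d x y \<le> 0 \<Longrightarrow> eq x y"
  shows "is_metric_space eq (\<lambda>e x y. d x y \<le> e)"
  unfolding is_metric_space_def
proof (intro conjI allI impI)
  fix e :: rat and x x' y y' :: 'a
  assume "eq x x'" "eq y y'"
  then show "d x y \<le> e \<longleftrightarrow> d x' y' \<le> e" using respects by simp
next
  fix e1 e2 :: rat and x y z :: 'a
  assume "d x y \<le> e1" "d y z \<le> e2"
  then show "d x z \<le> e1 + e2" using triangle[where x=x and y=y and z=z] by linarith
next
  fix e :: rat and x y :: 'a
  assume "0 < e" "\<forall>\<delta>. 0 < \<delta> \<longrightarrow> e < \<delta> \<longrightarrow> d x y \<le> \<delta>"
  then show "d x y \<le> e" using le_if_le_all_greater[where x="d x y" and e=e] by simp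
next
  fix x y :: 'a
  assume "\<forall>e. 0 < e \<longrightarrow> d x y \<le> e"
  then have "d x y \<le> 0" using le_if_le_all_greater[where x="d x y" and e=0] by simp
  then show "eq x y" by (rule definite)
qed (use assms(1) sym zero in simp_all)

lemma ball_rat_metric_space: "is_metric_space (=) ball_rat"
proof -
  have "ball_rat = (\<lambda>e x y. \<bar>x - y\<bar> \<le> e)" by (simp add: fun_eq_iff ball_rat_def)
  moreover have "is_metric_space (=) (\<lambda>e x y. \<bar>x - y\<bar> \<le> (e::rat))"
    by (rule distance_metric_space) (simp_all add: identity_equivp abs_minus_commute)
  ultimately show ?thesis by simp
qed

section \<open>The affine fold as an integral\<close>

lemma fold_affine_Const [simp]: "fold_affine (Const x) = x"
  by (simp add: fold_affine_def)

lemma fold_affine_Glue [simp]: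
  "fold_affine (Glue c f g) = Rep_ounit c * fold_affine f + (1 - Rep_ounit c) * fold_affine g"
  by (simp add: fold_affine_def)

text \<open>Rescaling the weights of a two-point combination; used to clear denominators.\<close>

lemma scale_combination:
  fixes p u v u' v' x y :: rat
  assumes "p * u = u'" "p * v = v'"
  shows "p * (u * x + v * y) = u' * x + v' * y"
  using assms by (simp add: distrib_left mult.assoc[symmetric])

text \<open>Additivity of the integral: splitting at proportion  a  and re-weighting the two
  pieces by  a  and  1 - a  does not change the mean value.\<close>

lemma fold_affine_split:
  "fold_affine x = Rep_ounit a * fold_affine (splitL x a) + (1 - Rep_ounit a) * fold_affine (splitR x a)"
proof (induction x arbitrary: a)
  case (Const x)
  then show ?case by (simp add: algebra_simps)
next
  case (Glue c fl fr)
  have nonzero: "Rep_ounit a \<noteq> 0" "1 - Rep_ounit a \<noteq> 0" "Rep_ounit c \<noteq> 0" "1 - Rep_ounit c \<noteq> 0"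
    using Rep_ounit_bounds[of a] Rep_ounit_bounds[of c] by auto
  consider "Rep_ounit a < Rep_ounit c" | "Rep_ounit a = Rep_ounit c" | "Rep_ounit c < Rep_ounit a"
    by fastforce
  then show ?case
  proof cases
    case 1
    define d e where "d = Rep_ounit (div_ou a c)" and "e = Rep_ounit (rescale_ou c a)"
    have d: "Rep_ounit c * d = Rep_ounit a" "Rep_ounit c * (1 - d) = Rep_ounit c - Rep_ounit a"
      and e: "(1 - Rep_ounit a) * e = Rep_ounit c - Rep_ounit a" "(1 - Rep_ounit a) * (1 - e) = 1 - Rep_ounit c"
      using 1 nonzero by (simp_all add: d_def e_def Rep_div_ou Rep_rescale_ou field_simps)
    have "Rep_ounit c * fold_affine fl = Rep_ounit a * fold_affine (splitL fl (div_ou a c))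
          + (Rep_ounit c - Rep_ounit a) * fold_affine (splitR fl (div_ou a c))"
      and "(1 - Rep_ounit a) * (e * fold_affine (splitR fl (div_ou a c)) + (1 - e) * fold_affine fr)
          = (Rep_ounit c - Rep_ounit a) * fold_affine (splitR fl (div_ou a c))
          + (1 - Rep_ounit c) * fold_affine fr"
      unfolding Glue.IH(1)[of "div_ou a c"] d_def[symmetric]
      by (rule scale_combination[OF d], rule scale_combination[OF e])
    then show ?thesis
      using 1 by (simp add: splitR_glue_point e_def algebra_simps)
  next
    case 2
    then show ?thesis by simp
  next
    case 3
    define d r where "d = Rep_ounit (div_ou c a)" and "r = Rep_ounit (rescale_ou a c)"
    have d: "Rep_ounit a * d = Rep_ounit c" "Rep_ounit a * (1 - d) = Rep_ounit a - Rep_ounit c"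
      and r: "(1 - Rep_ounit c) * r = Rep_ounit a - Rep_ounit c" "(1 - Rep_ounit c) * (1 - r) = 1 - Rep_ounit a"
      using 3 nonzero by (simp_all add: d_def r_def Rep_div_ou Rep_rescale_ou field_simps)
    have "Rep_ounit a * (d * fold_affine fl + (1 - d) * fold_affine (splitL fr (rescale_ou a c)))
          = Rep_ounit c * fold_affine fl + (Rep_ounit a - Rep_ounit c) * fold_affine (splitL fr (rescale_ou a c))"
      and "(1 - Rep_ounit c) * fold_affine fr
          = (Rep_ounit a - Rep_ounit c) * fold_affine (splitL fr (rescale_ou a c))
          + (1 - Rep_ounit a) * fold_affine (splitR fr (rescale_ou a c))"
      unfolding Glue.IH(2)[of "rescale_ou a c"] r_def[symmetric]
      by (rule scale_combination[OF d], rule scale_combination[OF r])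
    then show ?thesis
      using 3 by (simp add: d_def algebra_simps)
  qed
qed

lemma fold_affine_map_affine: "fold_affine (sf_map (\<lambda>v. k + s * v) g) = k + s * fold_affine g"
  by (induction g) (simp_all add: algebra_simps)

lemma fold_affine_linear:
  "fold_affine (sf_binop (\<lambda>u v. p * u + s * v) f g) = p * fold_affine f + s * fold_affine g"
  unfolding sf_binop_def
proof (induction f arbitrary: g)
  case (Const u)
  then show ?case by (simp add: fold_affine_map_affine)
next
  case (Glue c fl fr)
  have "fold_affine (sf_ap (sf_map (\<lambda>u v. p * u + s * v) (Glue c fl fr)) g)
      = p * fold_affine (Glue c fl fr)
        + s * (Rep_ounit c * fold_affine (splitL g c) + (1 - Rep_ounit c) * fold_affine (splitR g c))"
    using Glue.IH by (simp add: algebra_simps)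
  then show ?case by (simp flip: fold_affine_split)
qed

lemma fold_affine_nonneg:
  assumes "lo < hi" "everywhere (\<lambda>y. 0 \<le> y) h lo hi"
  shows "0 \<le> fold_affine h"
  using assms
proof (induction h arbitrary: lo hi)
  case (Const x)
  then show ?case by (simp add: everywhere_Const)
next
  case (Glue c f g)
  let ?m = "cut_point lo hi c"
  have "0 \<le> fold_affine f" "0 \<le> fold_affine g"
    using Glue.IH(1)[of lo ?m] Glue.IH(2)[of ?m hi] Glue.prems
    by (simp_all add: everywhere_Glue cut_point_bounds_iff)
  then show ?case using Rep_ounit_bounds[of c] by simp
qed

lemma fold_affine_mono:
  assumes "lo < hi" "\<forall>t\<in>{lo..<hi}. sf_eval h1 lo hi t \<le> sf_eval h2 lo hi t"
  shows "fold_affine h1 \<le> fold_affine h2"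
proof -
  let ?d = "sf_binop (\<lambda>u v. (-1) * u + 1 * v) h1 h2"
  have "0 \<le> fold_affine ?d"
    using assms by (intro fold_affine_nonneg[of lo hi]) (simp_all add: everywhere_def sf_eval_binop)
  moreover have "fold_affine ?d = fold_affine h2 - fold_affine h1"
    using fold_affine_linear[of "-1" 1 h1 h2] by simp
  ultimately show ?thesis by simp
qed

lemma fold_affine_cong:
  assumes "lo < hi" "\<forall>t\<in>{lo..<hi}. sf_eval h1 lo hi t = sf_eval h2 lo hi t"
  shows "fold_affine h1 = fold_affine h2"
  using assms by (intro antisym fold_affine_mono[of lo hi]) simp_all

lemma fold_affine_eq_zero:
  assumes "lo < hi" "everywhere (\<lambda>y. 0 \<le> y) h lo hi" "fold_affine h \<le> 0"
  shows "everywhere (\<lambda>y. y = 0) h lo hi"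
  using assms
proof (induction h arbitrary: lo hi)
  case (Const x)
  then show ?case by (simp add: everywhere_Const)
next
  case (Glue c f g)
  let ?m = "cut_point lo hi c"
  have nonneg: "everywhere (\<lambda>y. 0 \<le> y) f lo ?m" "everywhere (\<lambda>y. 0 \<le> y) g ?m hi"
    using Glue.prems by (simp_all add: everywhere_Glue)
  then have "0 \<le> fold_affine f" "0 \<le> fold_affine g"
    using Glue.prems(1) fold_affine_nonneg cut_point_bounds_iff by blast+
  then have "0 \<le> Rep_ounit c * fold_affine f" "0 \<le> (1 - Rep_ounit c) * fold_affine g"
    using Rep_ounit_bounds[of c] by simp_all
  then have "Rep_ounit c * fold_affine f \<le> 0" "(1 - Rep_ounit c) * fold_affine g \<le> 0"
    using Glue.prems(3) by simp_all
  then have "fold_affine f \<le> 0" "fold_affine g \<le> 0"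
    using Rep_ounit_bounds[of c] by (simp_all add: mult_le_0_iff)
  then show ?case
    using Glue.IH nonneg Glue.prems(1) by (simp add: everywhere_Glue cut_point_bounds_iff)
qed

lemma metric_space_ball_inf: "is_metric_space (sf_equiv (=)) ball_inf"
  unfolding sf_equiv_pointwise ball_inf_pointwise
  by (rule pointwise_metric_space[OF ball_rat_metric_space])

lemma metric_space_sup_lift:
  assumes "is_metric_space eq B"
  shows "is_metric_space (sf_equiv eq) (ball_sup_lift B)"
  unfolding sf_equiv_pointwise ball_sup_lift_pointwise
  by (rule pointwise_metric_space[OF assms])

definition abs_diff :: "rat stepfun \<Rightarrow> rat stepfun \<Rightarrow> rat stepfun" where
  "abs_diff f g = sf_map abs (sf_binop (-) f g)"

lemma sf_eval_abs_diff:
  assumes "t \<in> {0..<1}"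
  shows "sf_eval (abs_diff f g) 0 1 t = \<bar>sf_eval f 0 1 t - sf_eval g 0 1 t\<bar>"
  using assms by (simp add: abs_diff_def sf_eval_map sf_eval_binop)

lemma metric_space_ball_1: "is_metric_space (sf_equiv (=)) ball_1"
proof -
  let ?d = "\<lambda>f g. fold_affine (abs_diff f g)"
  have "ball_1 = (\<lambda>e f g. ?d f g \<le> e)"
    by (simp add: fun_eq_iff ball_1_def norm_1_def abs_diff_def)
  moreover have "is_metric_space (sf_equiv (=)) (\<lambda>e f g. ?d f g \<le> e)"
  proof (rule distance_metric_space)
    show "equivp (sf_equiv ((=) :: rat \<Rightarrow> rat \<Rightarrow> bool))"
      using metric_space_ball_inf by (simp add: is_metric_space_def)
  next
    fix f f' g g' :: "rat stepfun"
    assume "sf_equiv (=) f f'" "sf_equiv (=) g g'"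
    then show "?d f g = ?d f' g'"
      by (intro fold_affine_cong[of 0 1]) (simp_all add: sf_equiv_pointwise sf_eval_abs_diff)
  next
    fix f :: "rat stepfun"
    show "?d f f = 0"
      using fold_affine_cong[of 0 1 "abs_diff f f" "Const 0"] by (simp add: sf_eval_abs_diff)
  next
    fix f g :: "rat stepfun"
    show "?d f g = ?d g f"
      by (intro fold_affine_cong[of 0 1]) (simp_all add: sf_eval_abs_diff abs_minus_commute)
  next
    fix f g h :: "rat stepfun"
    let ?sum = "sf_binop (\<lambda>u v. 1 * u + 1 * v) (abs_diff f g) (abs_diff g h)"
    have "?d f h \<le> fold_affine ?sum"
      by (intro fold_affine_mono[of 0 1]) (auto simp: sf_eval_binop sf_eval_abs_diff)
    then show "?d f h \<le> ?d f g + ?d g h"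
      using fold_affine_linear[of 1 1 "abs_diff f g" "abs_diff g h"] by simp
  next
    fix f g :: "rat stepfun"
    assume "?d f g \<le> 0"
    then have "everywhere (\<lambda>y. y = 0) (abs_diff f g) 0 1"
      by (intro fold_affine_eq_zero) (simp_all add: everywhere_def sf_eval_abs_diff)
    then show "sf_equiv (=) f g"
      by (simp add: everywhere_def sf_equiv_pointwise sf_eval_abs_diff)
  qed
  ultimately show ?thesis by simp
qed

theorem mainTheorem11:
  shows "is_metric_space (sf_equiv (=)) ball_inf
       \<and> is_metric_space (sf_equiv (=)) ball_1
       \<and> (\<forall>(eq :: 'a \<Rightarrow> 'a \<Rightarrow> bool) B. is_metric_space eq B \<longrightarrow>
             is_metric_space (sf_equiv eq) (ball_sup_lift B))"
  using metric_space_ball_inf metric_space_ball_1 metric_space_sup_lift by blast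

end
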